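(* Let $f$ be a smooth real function on $\{x\in\mathbb{R}^n:|x-x_0|<\rho_0\}$, let $M(k)=\max_{|\alpha|=k}\sup|\partial^\alpha f|$ (supremum over this domain), and assume $\mathfrak{H}(x_0)\ge\nu_{x_0}I$ with $0<\nu_{x_0}<1$, where $\mathfrak{H}$ is the Hessian of $f$. There is a sufficiently small constant $c(n)>0$ such that, with $\nu_1:=c(n)\nu_{x_0}(1+M(2)+M(3))^{-1}$, the following holds. Let $h\in\mathbb{R}^n$ with $0<\|h\|<\min(\rho_0,\nu_1^6)$, and assume $$|f(x_0+h)-f(x_0)|\le\|h\|^3,\qquad\|\nabla f(x_0+h)-\lambda\nabla f(x_0)\|\le\|h\|^2$$ for some $\lambda\in\mathbb{R}$. Then $$\|h+2\mathfrak{H}(x_0)^{-1}\nabla f(x_0)\|\le\nu_1^{-8}\|\nabla f(x_0)\|^2.$$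
   Context: $|\cdot|$ is the sup-norm and $\|\cdot\|$ the Euclidean norm on $\mathbb{R}^n$. *)

theory Defs
  imports "HOL-Analysis.Analysis"
begin

text \<open>Iterated partial derivatives: pd [i1,...,ik] f = d_i1 ... d_ik f.
  A list of length k of coordinate indices encodes a multi-index of order k.\<close>
primrec pd :: "'n::finite list \<Rightarrow> (real^'n \<Rightarrow> real) \<Rightarrow> real^'n \<Rightarrow> real" where
  "pd [] f = f"
| "pd (i # is) f = (\<lambda>x. frechet_derivative (pd is f) (at x) (axis i 1))"

definition smooth_on :: "(real^'n::finite) set \<Rightarrow> (real^'n \<Rightarrow> real) \<Rightarrow> bool" where
  "smooth_on S f \<longleftrightarrow> (\<forall>is. \<forall>x\<in>S. pd is f differentiable (at x))"

definition supball :: "real^'n::finite \<Rightarrow> real \<Rightarrow> (real^'n) set" where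
  "supball x0 r = {x. infnorm (x - x0) < r}"

definition Mder :: "(real^'n::finite) set \<Rightarrow> (real^'n \<Rightarrow> real) \<Rightarrow> nat \<Rightarrow> real" where
  "Mder S f k = Sup {\<bar>pd is f x\<bar> | is x. length is = k \<and> x \<in> S}"

definition grad :: "(real^'n::finite \<Rightarrow> real) \<Rightarrow> real^'n \<Rightarrow> real^'n" where
  "grad f x = (\<chi> i. pd [i] f x)"

definition hess :: "(real^'n::finite \<Rightarrow> real) \<Rightarrow> real^'n \<Rightarrow> real^'n^'n" where
  "hess f x = (\<chi> i j. pd [i, j] f x)"

definition mat_ge_scalar :: "real^'n::finite^'n \<Rightarrow> real \<Rightarrow> bool" where
  "mat_ge_scalar H \<nu> \<longleftrightarrow> (\<forall>v. v \<bullet> (H *v v) \<ge> \<nu> * (v \<bullet> v))"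

end

(* Taylor's formula at x0, with the third derivatives bounded by M(3) and the mixed partials
   commuting (a consequence of the same bound), turns the two hypotheses into
     |g.h + h.Hh/2| <= |h|^3/nu1   and   |Hh - mu g| <= nu |h|^2/nu1,   mu = lambda - 1,
   where g = grad f(x0) and H = Hess f(x0). Put u = H^-1 g. Since H >= nu I, the second estimate
   gives h = mu u + d with |d| <= |h|^2/nu1 <= |h|/2, so |mu| |u| is comparable to |h|, and the first
   becomes |(1 + mu/2) mu (g.u)| = O(|h|^3) with g.u >= nu |u|^2. For |mu| > 4 this contradicts
   |h| < nu1^6; for |mu| <= 4 it forces |mu + 2| |u| = O(|u|^2/nu1^3), whence
   |h + 2u| = |(mu + 2) u + d| <= |u|^2/nu1^6 <= |g|^2/nu1^8. *)

theory Submission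
  imports Defs
begin

section \<open>Taylor expansion along segments\<close>

lemma pd_has_derivative:
  assumes "smooth_on S f" "x \<in> S"
  shows "(pd is f has_derivative (\<lambda>v. \<Sum>j\<in>UNIV. v$j * pd (j#is) f x)) (at x)"
proof -
  let ?D = "frechet_derivative (pd is f) (at x)"
  have D: "(pd is f has_derivative ?D) (at x)"
    using assms frechet_derivative_works unfolding smooth_on_def by blast
  have "?D v = (\<Sum>j\<in>UNIV. v$j * pd (j#is) f x)" for v
  proof -
    have "?D v = ?D (\<Sum>j\<in>UNIV. v$j *\<^sub>R axis j 1)"
      using basis_expansion[of v] by (simp add: scalar_mult_eq_scaleR)
    also have "\<dots> = (\<Sum>j\<in>UNIV. v$j * ?D (axis j 1))"
      using has_derivative_linear[OF D] by (simp add: linear_sum linear_scale)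
    finally show ?thesis by simp
  qed
  then have "?D = (\<lambda>v. \<Sum>j\<in>UNIV. v$j * pd (j#is) f x)" by (rule ext)
  then show ?thesis using D by simp
qed

lemma pd_along_line_has_real_derivative:
  assumes "smooth_on S f" "y + t *\<^sub>R v \<in> S"
  shows "((\<lambda>t. pd is f (y + t *\<^sub>R v)) has_real_derivative
           (\<Sum>j\<in>UNIV. v$j * pd (j#is) f (y + t *\<^sub>R v))) (at t)"
proof -
  have "((\<lambda>t. y + t *\<^sub>R v) has_derivative (\<lambda>t. t *\<^sub>R v)) (at t)"
    by (auto intro!: derivative_eq_intros)
  from diff_chain_at[OF this pd_has_derivative[OF assms]] show ?thesis
    unfolding has_field_derivative_def o_def
    by (rule has_derivative_eq_rhs) (auto simp: fun_eq_iff sum_distrib_left mult_ac)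
qed

text \<open>\<open>line_deriv f y v m is\<close> is the \<open>m\<close>-th derivative of \<open>t \<mapsto> pd is f (y + t v)\<close>,
  written out by the chain rule as a sum over multi-indices of order \<open>m\<close>.\<close>
primrec line_deriv :: "(real^'n::finite \<Rightarrow> real) \<Rightarrow> real^'n \<Rightarrow> real^'n \<Rightarrow> nat \<Rightarrow> 'n list \<Rightarrow> real \<Rightarrow> real"
where
  "line_deriv f y v 0 is = (\<lambda>t. pd is f (y + t *\<^sub>R v))"
| "line_deriv f y v (Suc m) is = (\<lambda>t. \<Sum>j\<in>UNIV. v$j * line_deriv f y v m (j#is) t)"

lemma line_deriv_has_real_derivative:
  assumes "smooth_on S f" "y + t *\<^sub>R v \<in> S"
  shows "(line_deriv f y v m is has_real_derivative line_deriv f y v (Suc m) is t) (at t)"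
proof (induction m arbitrary: "is")
  case 0
  show ?case using pd_along_line_has_real_derivative[OF assms] by simp
next
  case (Suc m)
  have "((\<lambda>t. \<Sum>j\<in>UNIV. v$j * line_deriv f y v m (j#is) t) has_real_derivative
          (\<Sum>j\<in>UNIV. v$j * line_deriv f y v (Suc m) (j#is) t)) (at t)"
    by (intro DERIV_sum DERIV_cmult Suc.IH)
  then show ?case by simp
qed

lemma abs_pd_le_Mder:
  assumes "bdd_above {\<bar>pd is f x\<bar> | is x. length is = k \<and> x \<in> S}" "length is = k" "x \<in> S"
  shows "\<bar>pd is f x\<bar> \<le> Mder S f k"
  unfolding Mder_def by (rule cSup_upper) (use assms in auto)

lemma Mder_nonneg:
  fixes f :: "real^'n::finite \<Rightarrow> real"
  assumes "bdd_above {\<bar>pd is f x\<bar> | is x. length is = k \<and> x \<in> S}" "x \<in> S"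
  shows "0 \<le> Mder S f k"
  using abs_pd_le_Mder[OF assms(1) _ assms(2), of "replicate k undefined"] by simp

lemma abs_line_deriv_le:
  assumes "y + t *\<^sub>R v \<in> S"
    and "bdd_above {\<bar>pd is f x\<bar> | is x. length is = m + length is0 \<and> x \<in> S}"
  shows "\<bar>line_deriv f y v m is0 t\<bar> \<le> (\<Sum>j\<in>UNIV. \<bar>v$j\<bar>)^m * Mder S f (m + length is0)"
  using assms(2)
proof (induction m arbitrary: is0)
  case 0
  then show ?case using abs_pd_le_Mder[OF _ _ assms(1)] by simp
next
  case (Suc m)
  let ?s = "\<Sum>j\<in>UNIV. \<bar>v$j\<bar>"
  let ?M = "Mder S f (Suc m + length is0)"
  have IH: "\<bar>line_deriv f y v m (j#is0) t\<bar> \<le> ?s^m * ?M" for j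
    using Suc.IH[of "j#is0"] Suc.prems by simp
  have "\<bar>line_deriv f y v (Suc m) is0 t\<bar> \<le> (\<Sum>j\<in>UNIV. \<bar>v$j\<bar> * \<bar>line_deriv f y v m (j#is0) t\<bar>)"
    by (simp add: sum_abs[THEN order_trans] abs_mult)
  also have "\<dots> \<le> (\<Sum>j\<in>UNIV. \<bar>v$j\<bar> * (?s^m * ?M))"
    by (intro sum_mono mult_left_mono IH) auto
  also have "\<dots> = ?s^Suc m * ?M"
    by (simp add: sum_distrib_right[symmetric] mult_ac)
  finally show ?case .
qed

lemma pd_taylor_bound:
  assumes "smooth_on S f" "\<And>t. 0 \<le> t \<Longrightarrow> t \<le> 1 \<Longrightarrow> y + t *\<^sub>R v \<in> S" "0 < m"
    and "bdd_above {\<bar>pd is f x\<bar> | is x. length is = m + length is0 \<and> x \<in> S}"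
  shows "\<bar>pd is0 f (y + v) - (\<Sum>k<m. line_deriv f y v k is0 0 / fact k)\<bar>
           \<le> (\<Sum>j\<in>UNIV. \<bar>v$j\<bar>)^m * Mder S f (m + length is0)"
proof -
  obtain \<xi> where \<xi>: "0 < \<xi>" "\<xi> < 1"
    "line_deriv f y v 0 is0 1
       = (\<Sum>k<m. line_deriv f y v k is0 0 / fact k) + line_deriv f y v m is0 \<xi> / fact m"
    using Maclaurin[of 1 m "\<lambda>k. line_deriv f y v k is0"]
      line_deriv_has_real_derivative[OF assms(1,2)] assms(3) by auto
  have "\<bar>line_deriv f y v m is0 \<xi> / fact m\<bar> \<le> \<bar>line_deriv f y v m is0 \<xi>\<bar>"
    using fact_ge_1[of m, where 'a=real] by (simp add: divide_le_eq mult_le_cancel_left1)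
  also have "\<dots> \<le> (\<Sum>j\<in>UNIV. \<bar>v$j\<bar>)^m * Mder S f (m + length is0)"
    using abs_line_deriv_le[OF assms(2) assms(4)] \<xi> by auto
  finally show ?thesis using \<xi> by simp
qed

lemma sum_scaleR_axis_mult:
  "(\<Sum>j\<in>UNIV. (s *\<^sub>R axis i (1::real))$j * X j) = s * X i"
proof -
  have "(\<Sum>j\<in>UNIV. (s *\<^sub>R axis i (1::real))$j * X j) = (\<Sum>j\<in>UNIV. if j = i then s * X j else 0)"
    by (rule sum.cong) (auto simp: axis_def)
  then show ?thesis by simp
qed

lemma line_deriv_axis:
  "line_deriv f y (s *\<^sub>R axis i 1) m is t
     = s^m * pd (replicate m i @ is) f (y + t *\<^sub>R (s *\<^sub>R axis i 1))"
proof (induction m arbitrary: "is")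
  case 0
  then show ?case by simp
next
  case (Suc m)
  have "line_deriv f y (s *\<^sub>R axis i 1) (Suc m) is t
      = s * line_deriv f y (s *\<^sub>R axis i 1) m (i#is) t"
    by (simp only: line_deriv.simps sum_scaleR_axis_mult)
  then show ?case
    using Suc.IH[of "i#is"] by (simp add: replicate_append_same[symmetric])
qed

lemma pd_axis_taylor_bound:
  assumes "smooth_on S f" "\<And>t. 0 \<le> t \<Longrightarrow> t \<le> 1 \<Longrightarrow> y + t *\<^sub>R (s *\<^sub>R axis i 1) \<in> S" "0 < m"
    and "bdd_above {\<bar>pd is f x\<bar> | is x. length is = m + length is0 \<and> x \<in> S}"
  shows "\<bar>pd is0 f (y + s *\<^sub>R axis i 1) - (\<Sum>k<m. s^k / fact k * pd (replicate k i @ is0) f y)\<bar>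
           \<le> \<bar>s\<bar>^m * Mder S f (m + length is0)"
proof -
  have "(\<Sum>j\<in>UNIV. \<bar>(s *\<^sub>R axis i (1::real))$j\<bar>) = \<bar>s\<bar>"
    by (simp add: axis_def if_distrib cong: if_cong)
  then show ?thesis
    using pd_taylor_bound[OF assms] by (simp add: line_deriv_axis)
qed

lemma sum_abs_le_card_mult_norm:
  fixes v :: "real^'n::finite"
  shows "(\<Sum>j\<in>UNIV. \<bar>v$j\<bar>) \<le> real CARD('n) * norm v"
  using sum_mono[of UNIV "\<lambda>j. \<bar>v$j\<bar>" "\<lambda>j. norm v"] component_le_norm_cart by auto

lemma pd_taylor_bound_norm:
  fixes f :: "real^'n::finite \<Rightarrow> real"
  assumes "smooth_on S f" "\<And>t. 0 \<le> t \<Longrightarrow> t \<le> 1 \<Longrightarrow> y + t *\<^sub>R v \<in> S" "0 < m"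
    and "bdd_above {\<bar>pd is f x\<bar> | is x. length is = m + length is0 \<and> x \<in> S}"
  shows "\<bar>pd is0 f (y + v) - (\<Sum>k<m. line_deriv f y v k is0 0 / fact k)\<bar>
           \<le> (real CARD('n) * norm v)^m * Mder S f (m + length is0)"
proof -
  have "0 \<le> Mder S f (m + length is0)"
    using Mder_nonneg[OF assms(4) assms(2)[of 0]] by simp
  then have "(\<Sum>j\<in>UNIV. \<bar>v$j\<bar>)^m * Mder S f (m + length is0) \<le> (real CARD('n) * norm v)^m * Mder S f (m + length is0)"
    using sum_abs_le_card_mult_norm[of v] by (intro mult_right_mono power_mono) (auto simp: sum_nonneg)
  then show ?thesis using pd_taylor_bound[OF assms] by linarith
qed

section \<open>Symmetry of the mixed partial derivatives\<close>

lemma convex_add_scaleR_mem: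
  assumes "convex C" "y \<in> C" "y + v \<in> C" "0 \<le> t" "t \<le> 1"
  shows "y + t *\<^sub>R v \<in> C"
proof -
  have "(1 - t) *\<^sub>R y + t *\<^sub>R (y + v) \<in> C"
    using assms unfolding convex_alt by blast
  moreover have "(1 - t) *\<^sub>R y + t *\<^sub>R (y + v) = y + t *\<^sub>R v"
    by (simp add: algebra_simps)
  ultimately show ?thesis by simp
qed

lemma ball_subset_segment_mem:
  fixes x0 :: "'a::real_normed_vector"
  assumes "ball x0 \<rho> \<subseteq> S" "y \<in> ball x0 \<rho>" "y + v \<in> ball x0 \<rho>" "0 \<le> t" "t \<le> 1"
  shows "y + t *\<^sub>R v \<in> S"
  using convex_add_scaleR_mem[OF convex_ball assms(2-5)] assms(1) by blast

lemma add_mem_ball_iff: "x0 + v \<in> ball x0 r \<longleftrightarrow> norm v < r"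
  by (simp add: dist_norm)

lemma ball_subset_supball: "ball x0 \<rho> \<subseteq> supball x0 \<rho>"
proof
  fix x assume "x \<in> ball x0 \<rho>"
  then have "norm (x - x0) < \<rho>" by (simp add: dist_norm norm_minus_commute)
  then show "x \<in> supball x0 \<rho>" unfolding supball_def using infnorm_le_norm[of "x - x0"] by simp
qed

lemma second_difference_estimate:
  fixes f :: "real^'n::finite \<Rightarrow> real"
  assumes sm: "smooth_on S f" and B: "ball x0 \<rho> \<subseteq> S"
    and b3: "bdd_above {\<bar>pd is f x\<bar> | is x. length is = 3 \<and> x \<in> S}"
    and s: "0 < s" "2 * s < \<rho>"
  shows "\<bar>f (x0 + s *\<^sub>R axis j 1 + s *\<^sub>R axis i 1) - f (x0 + s *\<^sub>R axis j 1)
          - f (x0 + s *\<^sub>R axis i 1) + f x0 - s^2 * pd [j,i] f x0\<bar>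
         \<le> 4 * s^3 * Mder S f 3"
proof -
  define a where "a = s *\<^sub>R axis i (1::real)"
  define b where "b = s *\<^sub>R axis j (1::real)"
  define y where "y = x0 + b"
  define M where "M = Mder S f 3"
  have M0: "0 \<le> M" unfolding M_def using Mder_nonneg[OF b3] B s by force
  have "norm a = s" "norm b = s" using s by (auto simp: a_def b_def)
  then have "norm (b + a) < \<rho>"
    using norm_triangle_ineq[of b a] s by linarith
  then have in_ball: "x0 \<in> ball x0 \<rho>" "y \<in> ball x0 \<rho>" "y + a \<in> ball x0 \<rho>" "x0 + a \<in> ball x0 \<rho>"
    using s \<open>norm a = s\<close> \<open>norm b = s\<close> unfolding y_def add.assoc add_mem_ball_iff
    by auto
  note seg = ball_subset_segment_mem[OF B]
  have b: "bdd_above {\<bar>pd is f x\<bar> | is x. length is = m + length is0 \<and> x \<in> S}"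
    if "m + length is0 = 3" for m and is0 :: "'n list"
    using b3 that by simp
  have T1: "\<bar>f (y + a) - (f y + s * pd [i] f y + s^2/2 * pd [i,i] f y)\<bar> \<le> s^3 * M"
    using pd_axis_taylor_bound[OF sm seg[OF in_ball(2,3)[unfolded a_def]], of 3 "[]"] s b[of 3 "[]"]
    by (simp add: a_def M_def eval_nat_numeral)
  have T2: "\<bar>f (x0 + a) - (f x0 + s * pd [i] f x0 + s^2/2 * pd [i,i] f x0)\<bar> \<le> s^3 * M"
    using pd_axis_taylor_bound[OF sm seg[OF in_ball(1,4)[unfolded a_def]], of 3 "[]"] s b[of 3 "[]"]
    by (simp add: a_def M_def eval_nat_numeral)
  have T3: "\<bar>pd [i] f y - (pd [i] f x0 + s * pd [j,i] f x0)\<bar> \<le> s^2 * M"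
    using pd_axis_taylor_bound[OF sm seg[OF in_ball(1,2)[unfolded y_def b_def]], of 2 "[i]"] s b[of 2 "[i]"]
    by (simp add: y_def b_def M_def eval_nat_numeral)
  have T4: "\<bar>pd [i,i] f y - pd [i,i] f x0\<bar> \<le> s * M"
    using pd_axis_taylor_bound[OF sm seg[OF in_ball(1,2)[unfolded y_def b_def]], of 1 "[i,i]"] s b[of 1 "[i,i]"]
    by (simp add: y_def b_def M_def eval_nat_numeral)
  have T3': "\<bar>s * (pd [i] f y - (pd [i] f x0 + s * pd [j,i] f x0))\<bar> \<le> s^3 * M"
    using mult_left_mono[OF T3, of s] s by (simp add: abs_mult power2_eq_square power3_eq_cube)
  have T4': "\<bar>s^2/2 * (pd [i,i] f y - pd [i,i] f x0)\<bar> \<le> s^3/2 * M"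
    using mult_left_mono[OF T4, of "s^2/2"] s by (simp add: abs_mult power2_eq_square power3_eq_cube)
  have "f (y + a) - f y - f (x0 + a) + f x0 - s^2 * pd [j,i] f x0
      = (f (y + a) - (f y + s * pd [i] f y + s^2/2 * pd [i,i] f y))
        - (f (x0 + a) - (f x0 + s * pd [i] f x0 + s^2/2 * pd [i,i] f x0))
        + s * (pd [i] f y - (pd [i] f x0 + s * pd [j,i] f x0))
        + s^2/2 * (pd [i,i] f y - pd [i,i] f x0)"
    by (simp add: algebra_simps power2_eq_square del: pd.simps)
  then have "\<bar>f (y + a) - f y - f (x0 + a) + f x0 - s^2 * pd [j,i] f x0\<bar>
      \<le> s^3 * M + s^3 * M + s^3 * M + s^3/2 * M"
    using T1 T2 T3' T4' by linarith
  also have "\<dots> \<le> 4 * s^3 * M"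
    using M0 s by simp
  finally show ?thesis by (simp add: y_def a_def b_def M_def)
qed

text \<open>The second difference is symmetric in \<open>i\<close> and \<open>j\<close>, so both mixed partials are its
  limit after division by \<open>s\<^sup>2\<close>.\<close>

lemma pd_commute:
  fixes f :: "real^'n::finite \<Rightarrow> real"
  assumes sm: "smooth_on S f" and B: "ball x0 \<rho> \<subseteq> S" and \<rho>: "0 < \<rho>"
    and b3: "bdd_above {\<bar>pd is f x\<bar> | is x. length is = 3 \<and> x \<in> S}"
  shows "pd [j,i] f x0 = pd [i,j] f x0"
proof -
  define D where "D = pd [j,i] f x0 - pd [i,j] f x0"
  define M where "M = Mder S f 3"
  have bound: "\<bar>D\<bar> \<le> 8 * M * s" if s: "0 < s" "s < \<rho>/2" for s
  proof -
    define \<Delta> where "\<Delta> = f (x0 + s *\<^sub>R axis j 1 + s *\<^sub>R axis i 1) - f (x0 + s *\<^sub>R axis j 1)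
      - f (x0 + s *\<^sub>R axis i 1) + f x0"
    have "x0 + s *\<^sub>R axis i 1 + s *\<^sub>R axis j 1 = x0 + s *\<^sub>R axis j 1 + s *\<^sub>R axis i (1::real)"
      by (simp add: algebra_simps)
    then have "\<bar>\<Delta> - s^2 * pd [j,i] f x0\<bar> \<le> 4 * s^3 * M" "\<bar>\<Delta> - s^2 * pd [i,j] f x0\<bar> \<le> 4 * s^3 * M"
      using second_difference_estimate[OF sm B b3, of s j i] second_difference_estimate[OF sm B b3, of s i j] s
      unfolding \<Delta>_def M_def by (simp_all add: algebra_simps)
    moreover have "s^2 * D = (\<Delta> - s^2 * pd [i,j] f x0) - (\<Delta> - s^2 * pd [j,i] f x0)"
      unfolding D_def by (simp add: algebra_simps)
    ultimately have "\<bar>s^2 * D\<bar> \<le> 8 * s^3 * M"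
      by (simp only: abs_le_iff) linarith
    then have "s^2 * \<bar>D\<bar> \<le> s^2 * (8 * M * s)"
      by (simp add: abs_mult power3_eq_cube power2_eq_square mult_ac)
    then show ?thesis using s by simp
  qed
  have "((\<lambda>s. 8 * M * s) \<longlongrightarrow> 0) (at_right 0)"
    by (auto intro!: tendsto_eq_intros)
  moreover have "\<forall>\<^sub>F s in at_right 0. \<bar>D\<bar> \<le> 8 * M * s"
    using bound eventually_at_right_real[of 0 "\<rho>/2"] \<rho> by (auto elim: eventually_mono)
  ultimately have "\<bar>D\<bar> \<le> 0"
    by (rule tendsto_lowerbound) simp
  then show ?thesis unfolding D_def by simp
qed

lemma transpose_hess:
  fixes f :: "real^'n::finite \<Rightarrow> real"
  assumes "smooth_on S f" "ball x0 \<rho> \<subseteq> S" "0 < \<rho>"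
    and "bdd_above {\<bar>pd is f x\<bar> | is x. length is = 3 \<and> x \<in> S}"
  shows "transpose (hess f x0) = hess f x0"
  using pd_commute[OF assms] by (simp add: vec_eq_iff transpose_def hess_def)

section \<open>The quadratic model at the base point\<close>

lemma taylor2_value:
  fixes f :: "real^'n::finite \<Rightarrow> real"
  assumes sm: "smooth_on S f" and seg: "\<And>t. 0 \<le> t \<Longrightarrow> t \<le> 1 \<Longrightarrow> x0 + t *\<^sub>R h \<in> S"
    and b3: "bdd_above {\<bar>pd is f x\<bar> | is x. length is = 3 \<and> x \<in> S}"
  shows "\<bar>f (x0 + h) - (f x0 + grad f x0 \<bullet> h + h \<bullet> (hess f x0 *v h) / 2)\<bar>
           \<le> (real CARD('n) * norm h)^3 * Mder S f 3"
proof -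
  have "line_deriv f x0 h 1 [] 0 = grad f x0 \<bullet> h"
    by (simp add: grad_def inner_vec_def mult.commute del: pd.simps)
  moreover have "line_deriv f x0 h 2 [] 0 = h \<bullet> (hess f x0 *v h)"
    by (simp add: hess_def inner_vec_def matrix_vector_mult_def numeral_2_eq_2 sum_distrib_left
        del: pd.simps) (subst sum.swap, simp add: mult_ac)
  moreover have "(\<Sum>k<3. a k) = a 0 + a 1 + a 2" for a :: "nat \<Rightarrow> real"
    by (simp add: eval_nat_numeral)
  ultimately have "(\<Sum>k<3. line_deriv f x0 h k [] 0 / fact k)
      = f x0 + grad f x0 \<bullet> h + h \<bullet> (hess f x0 *v h) / 2"
    by simp
  then show ?thesis
    using pd_taylor_bound_norm[OF sm seg, of 3 "[]"] b3 by simp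
qed

lemma taylor1_grad:
  fixes f :: "real^'n::finite \<Rightarrow> real"
  assumes sm: "smooth_on S f" and seg: "\<And>t. 0 \<le> t \<Longrightarrow> t \<le> 1 \<Longrightarrow> x0 + t *\<^sub>R h \<in> S"
    and b3: "bdd_above {\<bar>pd is f x\<bar> | is x. length is = 3 \<and> x \<in> S}"
    and sym: "transpose (hess f x0) = hess f x0"
  shows "norm (grad f (x0 + h) - grad f x0 - hess f x0 *v h) \<le> real CARD('n)^3 * norm h^2 * Mder S f 3"
proof -
  define N where "N = real CARD('n)"
  have "\<bar>(grad f (x0 + h) - grad f x0 - hess f x0 *v h)$i\<bar> \<le> (N * norm h)^2 * Mder S f 3" for i
  proof -
    have "line_deriv f x0 h 1 [i] 0 = (transpose (hess f x0) *v h)$i"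
      by (simp add: hess_def transpose_def matrix_vector_mult_def mult.commute del: pd.simps)
    moreover have "(\<Sum>k<2. a k) = a 0 + a 1" for a :: "nat \<Rightarrow> real"
      by (simp add: eval_nat_numeral)
    ultimately have "(\<Sum>k<2. line_deriv f x0 h k [i] 0 / fact k) = pd [i] f x0 + (hess f x0 *v h)$i"
      using sym by simp
    then show ?thesis
      using pd_taylor_bound_norm[OF sm seg, of 2 "[i]"] b3
      by (simp add: grad_def N_def del: pd.simps)
  qed
  then have "norm (grad f (x0 + h) - grad f x0 - hess f x0 *v h)
      \<le> (\<Sum>i\<in>(UNIV::'n set). (N * norm h)^2 * Mder S f 3)"
    by (intro order_trans[OF norm_le_l1_cart] sum_mono)
  then show ?thesis by (simp add: N_def power2_eq_square power3_eq_cube mult_ac)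
qed

lemma quadratic_model_value:
  fixes f :: "real^'n::finite \<Rightarrow> real"
  assumes sm: "smooth_on S f" and seg: "\<And>t. 0 \<le> t \<Longrightarrow> t \<le> 1 \<Longrightarrow> x0 + t *\<^sub>R h \<in> S"
    and b3: "bdd_above {\<bar>pd is f x\<bar> | is x. length is = 3 \<and> x \<in> S}"
    and fh: "\<bar>f (x0 + h) - f x0\<bar> \<le> norm h^3"
    and K3: "1 + real CARD('n)^3 * Mder S f 3 \<le> \<nu> / w" and w: "0 < w" "\<nu> \<le> 1"
  shows "\<bar>grad f x0 \<bullet> h + h \<bullet> (hess f x0 *v h) / 2\<bar> \<le> norm h^3 / w"
proof -
  have "\<bar>grad f x0 \<bullet> h + h \<bullet> (hess f x0 *v h) / 2\<bar>
      \<le> norm h^3 + (real CARD('n) * norm h)^3 * Mder S f 3"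
    using taylor2_value[OF sm seg b3] fh by linarith
  also have "\<dots> = norm h^3 * (1 + real CARD('n)^3 * Mder S f 3)"
    by (simp add: algebra_simps)
  also have "\<dots> \<le> norm h^3 * (1 / w)"
    using K3 divide_right_mono[OF w(2), of w] w by (intro mult_left_mono) auto
  finally show ?thesis by simp
qed

lemma quadratic_model_gradient:
  fixes f :: "real^'n::finite \<Rightarrow> real"
  assumes sm: "smooth_on S f" and seg: "\<And>t. 0 \<le> t \<Longrightarrow> t \<le> 1 \<Longrightarrow> x0 + t *\<^sub>R h \<in> S"
    and b3: "bdd_above {\<bar>pd is f x\<bar> | is x. length is = 3 \<and> x \<in> S}"
    and sym: "transpose (hess f x0) = hess f x0"
    and gh: "norm (grad f (x0 + h) - l *\<^sub>R grad f x0) \<le> norm h^2"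
    and K3: "1 + real CARD('n)^3 * Mder S f 3 \<le> \<nu> / w"
  shows "norm (hess f x0 *v h - (l - 1) *\<^sub>R grad f x0) \<le> \<nu> * norm h^2 / w"
proof -
  let ?g = "grad f x0" and ?H = "hess f x0"
  have "?H *v h - (l - 1) *\<^sub>R ?g = (grad f (x0 + h) - l *\<^sub>R ?g) - (grad f (x0 + h) - ?g - ?H *v h)"
    by (simp add: algebra_simps)
  then have "norm (?H *v h - (l - 1) *\<^sub>R ?g)
      \<le> norm (grad f (x0 + h) - l *\<^sub>R ?g) + norm (grad f (x0 + h) - ?g - ?H *v h)"
    by (metis norm_triangle_ineq4)
  also have "\<dots> \<le> norm h^2 + real CARD('n)^3 * norm h^2 * Mder S f 3"
    using gh taylor1_grad[OF sm seg b3 sym] by (rule add_mono)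
  also have "\<dots> = norm h^2 * (1 + real CARD('n)^3 * Mder S f 3)"
    by (simp add: algebra_simps)
  also have "\<dots> \<le> norm h^2 * (\<nu> / w)"
    using K3 by (intro mult_left_mono) auto
  finally show ?thesis by (simp add: mult.commute)
qed

section \<open>Locating the step relative to the Newton direction\<close>

lemma mat_ge_scalar_norm_le:
  assumes "0 < \<nu>" "mat_ge_scalar H \<nu>"
  shows "\<nu> * norm v \<le> norm (H *v v)"
proof (cases "v = 0")
  case False
  have "\<nu> * (v \<bullet> v) \<le> v \<bullet> (H *v v)"
    using assms(2) unfolding mat_ge_scalar_def by blast
  then have "\<nu> * norm v * norm v \<le> norm v * norm (H *v v)"
    using norm_cauchy_schwarz[of v "H *v v"] by (simp add: dot_square_norm power2_eq_square mult_ac)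
  then show ?thesis using False by (simp add: mult.commute)
qed simp

lemma invertible_if_mat_ge_scalar:
  assumes "0 < \<nu>" "mat_ge_scalar H \<nu>"
  shows "invertible H"
  unfolding invertible_left_inverse matrix_left_invertible_ker
  using mat_ge_scalar_norm_le[OF assms] assms(1)
  by (metis mult_le_0_iff norm_eq_zero norm_ge_zero norm_zero order_antisym not_less)

lemma matrix_inv_mult_vector:
  fixes H :: "'a::field^'n^'n"
  assumes "invertible H"
  shows "H *v (matrix_inv H *v g) = g"
proof -
  have "H ** matrix_inv H = mat 1 \<and> matrix_inv H ** H = mat 1"
    unfolding matrix_inv_def using assms[unfolded invertible_def] by (rule someI_ex)
  then show ?thesis by (simp add: matrix_vector_mul_assoc)
qed

lemma norm_matrix_vector_mult_le:
  fixes A :: "real^'n::finite^'m::finite"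
  assumes A: "\<And>i j. \<bar>A$i$j\<bar> \<le> B"
  shows "norm (A *v v) \<le> real CARD('m) * real CARD('n) * B * norm v"
proof -
  have row: "\<bar>(A *v v)$i\<bar> \<le> B * (real CARD('n) * norm v)" for i
  proof -
    have "\<bar>(A *v v)$i\<bar> \<le> (\<Sum>j\<in>UNIV. \<bar>A$i$j\<bar> * \<bar>v$j\<bar>)"
      unfolding matrix_vector_mult_def by (simp add: sum_abs[THEN order_trans] abs_mult)
    also have "\<dots> \<le> (\<Sum>j\<in>UNIV. B * \<bar>v$j\<bar>)"
      by (intro sum_mono mult_right_mono A) auto
    also have "\<dots> \<le> B * (real CARD('n) * norm v)"
      using sum_abs_le_card_mult_norm[of v] order_trans[OF abs_ge_zero A]
      by (simp add: sum_distrib_left[symmetric] mult_left_mono)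
    finally show ?thesis .
  qed
  have "norm (A *v v) \<le> (\<Sum>i\<in>UNIV. \<bar>(A *v v)$i\<bar>)"
    by (rule norm_le_l1_cart)
  also have "\<dots> \<le> (\<Sum>i\<in>(UNIV::'m set). B * (real CARD('n) * norm v))"
    by (intro sum_mono row)
  finally show ?thesis by (simp add: mult_ac)
qed

lemma divide_power_le_divide_power:
  fixes w x :: real
  assumes "0 < w" "w \<le> 1" "k \<le> n" "0 \<le> x"
  shows "x / w^k \<le> x / w^n"
  using assms by (intro divide_left_mono power_decreasing) auto

lemma power3_le_of_le_one_ninth:
  fixes w :: real
  assumes "0 \<le> w" "w \<le> 1/9"
  shows "w^3 \<le> 1/729"
proof -
  have "w^3 \<le> (1/9)^3" using assms by (intro power_mono) auto
  then show ?thesis by (simp add: power_divide)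
qed

lemma multiplier_add_two_bound:
  fixes m s r w q :: real
  assumes w: "0 < w" and r: "0 < r" and s: "0 \<le> s" and m: "\<bar>m\<bar> \<le> 4"
    and ms: "r/2 \<le> \<bar>m\<bar> * s" and q: "w * s^2 \<le> q"
    and E: "\<bar>(1 + m/2) * m * q\<bar> \<le> 3 * r^3 / (2*w) + \<bar>1 + m/2\<bar> * s * r^2 / w^2"
  shows "\<bar>m + 2\<bar> * s \<le> 6 * r^2 / w^2 + 12 * s * r / w^3"
proof -
  have q0: "0 \<le> q"
    using q w s by (meson mult_nonneg_nonneg order_trans zero_le_power2 less_imp_le)
  have "(w * r / 4) * (\<bar>m + 2\<bar> * s) \<le> \<bar>m + 2\<bar> / 2 * \<bar>m\<bar> * (w * s^2)"
    using mult_left_mono[OF ms, of "\<bar>m + 2\<bar> * w * s / 2"] w s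
    by (simp add: power2_eq_square mult_ac)
  also have "\<dots> \<le> \<bar>m + 2\<bar> / 2 * \<bar>m\<bar> * q"
    using q by (intro mult_left_mono) auto
  also have "\<dots> = \<bar>(1 + m/2) * m * q\<bar>"
  proof -
    have "\<bar>m + 2\<bar> / 2 = \<bar>1 + m/2\<bar>" by (simp add: abs_if field_simps)
    then show ?thesis using q0 by (simp add: abs_mult)
  qed
  also have "\<dots> \<le> 3 * r^3 / (2*w) + 3 * s * r^2 / w^2"
  proof -
    have "\<bar>1 + m/2\<bar> \<le> 3" using m by linarith
    then have "\<bar>1 + m/2\<bar> * s * r^2 / w^2 \<le> 3 * s * r^2 / w^2"
      using s by (intro divide_right_mono mult_right_mono) auto
    then show ?thesis using E by linarith
  qed
  also have "\<dots> = (w * r / 4) * (6 * r^2 / w^2 + 12 * s * r / w^3)"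
    using w by (simp add: field_simps power2_eq_square power3_eq_cube)
  finally show ?thesis
    using w r by (simp add: mult_le_cancel_left_pos)
qed

lemma error_terms_le_sq_div_power6:
  fixes s r w :: real
  assumes w: "0 < w" "w \<le> 1/9" and r: "0 < r" "r \<le> 8 * s"
  shows "6 * r^2 / w^2 + 12 * s * r / w^3 + r^2 / w \<le> s^2 / w^6"
proof -
  have s: "0 \<le> s" and r2: "r^2 \<le> 64 * s^2"
    using r power_mono[OF r(2), of 2] by (simp_all add: power_mult_distrib)
  have "6 * r^2 / w^2 \<le> 384 * s^2 / w^2" using r2 w by (simp add: divide_right_mono)
  also have "\<dots> \<le> 384 * s^2 / w^3" using w by (intro divide_power_le_divide_power) auto
  finally have 1: "6 * r^2 / w^2 \<le> 384 * s^2 / w^3" .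
  have "12 * s * r \<le> 96 * s^2" using mult_left_mono[OF r(2) s] by (simp add: power2_eq_square mult_ac)
  then have 2: "12 * s * r / w^3 \<le> 96 * s^2 / w^3" using w by (simp add: divide_right_mono)
  have "r^2 / w \<le> 64 * s^2 / w^1" using r2 w by (simp add: divide_right_mono)
  also have "\<dots> \<le> 64 * s^2 / w^3" using w by (intro divide_power_le_divide_power) auto
  finally have 3: "r^2 / w \<le> 64 * s^2 / w^3" .
  have "544 * w^3 \<le> 1" using power3_le_of_le_one_ninth[of w] w by linarith
  then have "544 * w^3 * s^2 \<le> 1 * s^2" by (intro mult_right_mono) auto
  then have "544 * w^3 * s^2 / w^6 \<le> s^2 / w^6" using w by (simp add: divide_right_mono)
  moreover have "544 * s^2 / w^3 = 544 * w^3 * s^2 / (w^3 * w^3)" using w by (simp add: field_simps)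
  moreover have "w^3 * w^3 = w^6" by (simp flip: power_add)
  ultimately have "544 * s^2 / w^3 \<le> s^2 / w^6" by simp
  with 1 2 3 show ?thesis by linarith
qed

lemma small_multiplier_bound:
  fixes m s r w q :: real
  assumes w: "0 < w" "w \<le> 1/9" and r: "0 < r" and s: "0 \<le> s" and m: "\<bar>m\<bar> \<le> 4"
    and ms: "r/2 \<le> \<bar>m\<bar> * s" and q: "w * s^2 \<le> q"
    and E: "\<bar>(1 + m/2) * m * q\<bar> \<le> 3 * r^3 / (2*w) + \<bar>1 + m/2\<bar> * s * r^2 / w^2"
  shows "\<bar>m + 2\<bar> * s + r^2 / w \<le> s^2 / w^6"
proof -
  have "r \<le> 8 * s" using ms mult_right_mono[OF m s] by linarith
  then show ?thesis
    using multiplier_add_two_bound[OF w(1) r s m ms q E] error_terms_le_sq_div_power6[OF w r, of s]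
    by linarith
qed

lemma large_multiplier_contradiction:
  fixes m s r w q :: real
  assumes w: "0 < w" "w \<le> 1/9" and r: "0 < r" "r < w^6" and s: "0 \<le> s" and m: "4 < \<bar>m\<bar>"
    and ms: "r/2 \<le> \<bar>m\<bar> * s" "\<bar>m\<bar> * s \<le> 2 * r" and q: "w * s^2 \<le> q"
    and E: "\<bar>(1 + m/2) * m * q\<bar> \<le> 3 * r^3 / (2*w) + \<bar>1 + m/2\<bar> * s * r^2 / w^2"
  shows False
proof -
  have q0: "0 \<le> q"
    using q w s by (meson mult_nonneg_nonneg order_trans zero_le_power2 less_imp_le)
  have "w * r^2 / 16 = w * (r/2)^2 / 4" by (simp add: power2_eq_square)
  also have "\<dots> \<le> w * (\<bar>m\<bar> * s)^2 / 4"
    using ms r w by (intro divide_right_mono mult_left_mono power_mono) auto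
  also have "\<dots> = (\<bar>m\<bar>/4) * \<bar>m\<bar> * (w * s^2)" by (simp add: power2_eq_square)
  also have "\<dots> \<le> \<bar>1 + m/2\<bar> * \<bar>m\<bar> * q"
  proof -
    have "\<bar>m\<bar>/4 \<le> \<bar>1 + m/2\<bar>" using m by linarith
    then show ?thesis using q w s by (intro mult_mono) auto
  qed
  also have "\<dots> = \<bar>(1 + m/2) * m * q\<bar>" using q0 by (simp add: abs_mult)
  also have "\<dots> \<le> 3 * r^3 / (2*w) + \<bar>m\<bar> * s * r^2 / w^2"
  proof -
    have "\<bar>1 + m/2\<bar> \<le> \<bar>m\<bar>" using m by (auto simp: abs_if)
    then have "\<bar>1 + m/2\<bar> * s * r^2 / w^2 \<le> \<bar>m\<bar> * s * r^2 / w^2"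
      using s by (intro divide_right_mono mult_right_mono) auto
    then show ?thesis using E by linarith
  qed
  also have "\<dots> \<le> 2 * r^3 / w^2 + 2 * r * r^2 / w^2"
  proof (intro add_mono)
    have "3 * r^3 / (2*w) = (3 * w / 2) * r^3 / w^2" using w by (simp add: field_simps power2_eq_square)
    also have "\<dots> \<le> 2 * r^3 / w^2" using w r by (intro divide_right_mono mult_right_mono) auto
    finally show "3 * r^3 / (2*w) \<le> 2 * r^3 / w^2" .
    show "\<bar>m\<bar> * s * r^2 / w^2 \<le> 2 * r * r^2 / w^2"
      using ms r w by (intro divide_right_mono mult_right_mono) auto
  qed
  finally have "w * r^2 / 16 \<le> 4 * r^3 / w^2" by (simp add: power3_eq_cube power2_eq_square)
  then have "w^3 \<le> 64 * r" using w r by (simp add: field_simps power2_eq_square power3_eq_cube)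
  also have "\<dots> < w^3 * (64 * w^3)" using r by (simp add: power_add[symmetric] mult_ac)
  finally have "1 < 64 * w^3" using w by simp
  moreover have "w^3 \<le> 1/729" using power3_le_of_le_one_ninth[of w] w by linarith
  ultimately show False by linarith
qed

lemma residual_along_newton_direction:
  fixes h u g :: "real^'n::finite"
  assumes w: "0 < w" "w \<le> 1/9" "w \<le> \<nu>" and pd: "mat_ge_scalar H \<nu>" and Hu: "H *v u = g"
    and r: "norm h < w^6" and e: "norm (H *v h - \<mu> *\<^sub>R g) \<le> \<nu> * norm h^2 / w"
  shows "norm (h - \<mu> *\<^sub>R u) \<le> norm h^2 / w" "norm (h - \<mu> *\<^sub>R u) \<le> norm h / 2"
proof -
  have "H *v (h - \<mu> *\<^sub>R u) = H *v h - \<mu> *\<^sub>R g"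
    using Hu by (simp add: matrix_vector_mult_diff_distrib matrix_vector_mult_scaleR)
  then have "\<nu> * norm (h - \<mu> *\<^sub>R u) \<le> \<nu> * (norm h^2 / w)"
    using mat_ge_scalar_norm_le[OF _ pd, of "h - \<mu> *\<^sub>R u"] e w by simp
  then show 1: "norm (h - \<mu> *\<^sub>R u) \<le> norm h^2 / w"
    by (rule mult_left_le_imp_le) (use w in linarith)
  have "norm h / w \<le> w^5"
    using r w by (simp add: divide_le_eq power_Suc[symmetric] mult.commute less_imp_le)
  also have "w^5 \<le> w"
    using power_decreasing[of 1 5 w] w by simp
  finally have "norm h / w \<le> 1/2"
    using w by linarith
  then have "norm h * (norm h / w) \<le> norm h * (1/2)"
    by (rule mult_left_mono) simp
  then have "norm h^2 / w \<le> norm h / 2"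
    by (simp add: power2_eq_square)
  then show "norm (h - \<mu> *\<^sub>R u) \<le> norm h / 2" using 1 by linarith
qed

lemma multiplier_equation_bound:
  fixes g u h :: "real^'n::finite" and H :: "real^'n^'n"
  assumes w: "0 < w" "\<nu> \<le> 1" and g: "norm g \<le> norm u / w"
    and d: "norm (h - \<mu> *\<^sub>R u) \<le> norm h^2 / w"
    and E: "\<bar>g \<bullet> h + h \<bullet> (H *v h) / 2\<bar> \<le> norm h^3 / w"
    and e: "norm (H *v h - \<mu> *\<^sub>R g) \<le> \<nu> * norm h^2 / w"
  shows "\<bar>(1 + \<mu>/2) * \<mu> * (g \<bullet> u)\<bar>
           \<le> 3 * norm h^3 / (2*w) + \<bar>1 + \<mu>/2\<bar> * norm u * norm h^2 / w^2"
proof -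
  define d where "d = h - \<mu> *\<^sub>R u"
  define ee where "ee = H *v h - \<mu> *\<^sub>R g"
  have expansion: "g \<bullet> h + h \<bullet> (H *v h) / 2 = (1 + \<mu>/2) * (\<mu> * (g \<bullet> u) + g \<bullet> d) + (h \<bullet> ee) / 2"
  proof -
    have "g \<bullet> h = \<mu> * (g \<bullet> u) + g \<bullet> d" unfolding d_def by (simp add: inner_diff_right)
    moreover have "h \<bullet> (H *v h) = \<mu> * (g \<bullet> h) + h \<bullet> ee"
      unfolding ee_def by (simp add: inner_diff_right inner_commute)
    ultimately show ?thesis by (simp add: algebra_simps)
  qed
  have "\<bar>g \<bullet> d\<bar> \<le> norm g * norm d" by (rule Cauchy_Schwarz_ineq2)
  also have "\<dots> \<le> (norm u / w) * (norm h^2 / w)" using g d w(1) unfolding d_def by (intro mult_mono) auto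
  finally have gd: "\<bar>g \<bullet> d\<bar> \<le> norm u * norm h^2 / w^2" by (simp add: power2_eq_square)
  have "\<bar>h \<bullet> ee\<bar> \<le> norm h * (\<nu> * norm h^2 / w)"
    using Cauchy_Schwarz_ineq2[of h ee] mult_left_mono[OF e norm_ge_zero[of h]] unfolding ee_def by linarith
  also have "\<dots> \<le> norm h * (1 * norm h^2 / w)"
    using w by (intro mult_left_mono divide_right_mono mult_right_mono) auto
  finally have he: "\<bar>h \<bullet> ee\<bar> \<le> norm h^3 / w" by (simp add: power3_eq_cube power2_eq_square)
  have "(1 + \<mu>/2) * \<mu> * (g \<bullet> u) = (g \<bullet> h + h \<bullet> (H *v h) / 2) - (1 + \<mu>/2) * (g \<bullet> d) - (h \<bullet> ee) / 2"
    unfolding expansion by (simp add: algebra_simps)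
  moreover have "\<bar>(1 + \<mu>/2) * (g \<bullet> d)\<bar> \<le> \<bar>1 + \<mu>/2\<bar> * (norm u * norm h^2 / w^2)"
    unfolding abs_mult using gd by (intro mult_left_mono) auto
  ultimately show ?thesis using E he by (simp add: abs_triangle_ineq4)
qed

lemma step_bound_of_quadratic_model:
  fixes g u h :: "real^'n::finite" and H :: "real^'n^'n"
  assumes w: "0 < w" "w \<le> 1/9" "w \<le> \<nu>" "\<nu> \<le> 1"
    and pd: "mat_ge_scalar H \<nu>" and Hu: "H *v u = g" and g: "norm g \<le> norm u / w"
    and r: "0 < norm h" "norm h < w^6"
    and E: "\<bar>g \<bullet> h + h \<bullet> (H *v h) / 2\<bar> \<le> norm h^3 / w"
    and e: "norm (H *v h - \<mu> *\<^sub>R g) \<le> \<nu> * norm h^2 / w"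
  shows "norm (h + 2 *\<^sub>R u) \<le> inverse (w^8) * norm g^2"
proof -
  define r where "r = norm h"
  define s where "s = norm u"
  define q where "q = g \<bullet> u"
  define d where "d = h - \<mu> *\<^sub>R u"
  have s: "0 \<le> s" unfolding s_def by simp
  have d: "norm d \<le> r^2 / w" "norm d \<le> r/2"
    using residual_along_newton_direction[OF w(1-3) pd Hu r(2) e] unfolding d_def r_def by auto
  have ms: "r/2 \<le> \<bar>\<mu>\<bar> * s" "\<bar>\<mu>\<bar> * s \<le> 2 * r"
    using d(2) norm_triangle_ineq[of "\<mu> *\<^sub>R u" d] norm_triangle_ineq4[of h d]
    unfolding r_def s_def d_def by auto
  have "\<nu> * s^2 \<le> q"
    using pd Hu unfolding mat_ge_scalar_def q_def s_def by (metis inner_commute power2_norm_eq_inner)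
  then have q: "w * s^2 \<le> q"
    using w(3) by (meson mult_right_mono order_trans zero_le_power2)
  have E': "\<bar>(1 + \<mu>/2) * \<mu> * q\<bar> \<le> 3 * r^3 / (2*w) + \<bar>1 + \<mu>/2\<bar> * s * r^2 / w^2"
    using multiplier_equation_bound[OF w(1,4) g _ E e] d(1) unfolding r_def s_def q_def d_def .
  have "\<nu> * s \<le> norm g"
    using mat_ge_scalar_norm_le[OF _ pd, of u] w Hu unfolding s_def by simp
  then have ws: "w * s \<le> norm g"
    using mult_right_mono[OF w(3) s] by linarith
  show ?thesis
  proof (cases "\<bar>\<mu>\<bar> \<le> 4")
    case True
    have "h + 2 *\<^sub>R u = (\<mu> + 2) *\<^sub>R u + d" unfolding d_def by (simp add: algebra_simps)
    then have "norm (h + 2 *\<^sub>R u) \<le> \<bar>\<mu> + 2\<bar> * s + r^2 / w"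
      using norm_triangle_ineq[of "(\<mu> + 2) *\<^sub>R u" d] d(1) unfolding s_def by simp
    also have "\<dots> \<le> s^2 / w^6"
      using small_multiplier_bound[OF w(1,2) _ s True ms(1) q E'] r unfolding r_def by simp
    also have "\<dots> = inverse (w^8) * (w * s)^2"
      using w by (simp add: field_simps flip: power_add)
    also have "\<dots> \<le> inverse (w^8) * norm g^2"
      using ws w s by (intro mult_left_mono power_mono) auto
    finally show ?thesis .
  next
    case False
    then show ?thesis
      using large_multiplier_contradiction[OF w(1,2) _ _ s _ ms q E'] r unfolding r_def by simp
  qed
qed

text \<open>The constant is \<open>c = 1 / (9 n\<^sup>3)\<close>: the factor \<open>n\<^sup>3\<close> absorbs the passage between
  \<open>l\<^sup>1\<close> and Euclidean norms in the Taylor remainders, and \<open>1/9\<close> is what the case analysis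
  on the multiplier needs.\<close>

lemma weight_bounds:
  fixes N M2 M3 \<nu> :: real
  assumes N: "1 \<le> N" and M: "0 \<le> M2" "0 \<le> M3" and \<nu>: "0 < \<nu>" "\<nu> < 1"
    and w_def: "w = 1 / (9 * N^3) * \<nu> / (1 + M2 + M3)"
  shows "0 < w" "w \<le> 1/9" "w \<le> \<nu>" "1 + N^3 * M3 \<le> \<nu> / w" "N^2 * M2 \<le> 1 / w"
proof -
  have N3: "1 \<le> N^3" "N^2 \<le> N^3"
    using N by (simp_all add: power_increasing)
  have \<nu>w: "\<nu> / w = 9 * N^3 * (1 + M2 + M3)"
    using N \<nu> M unfolding w_def by (simp add: field_simps)
  show "0 < w" using N \<nu> M unfolding w_def by simp
  have "1 * 1 \<le> N^3 * (1 + M2 + M3)"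
    using M N N3 by (intro mult_mono) auto
  then have "\<nu> / (9 * (N^3 * (1 + M2 + M3))) \<le> \<nu> / (9 * (1 * 1))"
    using \<nu> by (intro divide_left_mono) auto
  then have "w \<le> \<nu> / 9"
    unfolding w_def by (simp add: mult.assoc)
  then show "w \<le> 1/9" "w \<le> \<nu>" using \<nu> by linarith+
  have expand: "\<nu> / w = 9 * N^3 + 9 * (N^3 * M2) + 9 * (N^3 * M3)"
    unfolding \<nu>w by (simp add: algebra_simps)
  have P: "0 \<le> N^3 * M2" "0 \<le> N^3 * M3"
    using N M by simp_all
  then show "1 + N^3 * M3 \<le> \<nu> / w"
    unfolding expand using N3 by linarith
  have "N^2 * M2 \<le> \<nu> / w"
    unfolding expand using mult_right_mono[OF N3(2) M(1)] N3 P by linarith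
  also have "\<nu> / w \<le> 1 / w"
    using \<nu> \<open>0 < w\<close> by (simp add: divide_right_mono)
  finally show "N^2 * M2 \<le> 1 / w" .
qed

lemma step_bound_of_smooth:
  fixes f :: "real^'n::finite \<Rightarrow> real"
  assumes sm: "smooth_on S f" and B: "ball x0 \<rho> \<subseteq> S"
    and b2: "bdd_above {\<bar>pd is f x\<bar> | is x. length is = 2 \<and> x \<in> S}"
    and b3: "bdd_above {\<bar>pd is f x\<bar> | is x. length is = 3 \<and> x \<in> S}"
    and w: "0 < w" "w \<le> 1/9" "w \<le> \<nu>" "\<nu> \<le> 1"
    and K3: "1 + real CARD('n)^3 * Mder S f 3 \<le> \<nu> / w"
    and K2: "real CARD('n)^2 * Mder S f 2 \<le> 1 / w"
    and pd: "mat_ge_scalar (hess f x0) \<nu>"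
    and h: "0 < norm h" "norm h < \<rho>" "norm h < w^6"
    and fh: "\<bar>f (x0 + h) - f x0\<bar> \<le> norm h^3"
    and gh: "norm (grad f (x0 + h) - l *\<^sub>R grad f x0) \<le> norm h^2"
  shows "norm (h + 2 *\<^sub>R (matrix_inv (hess f x0) *v grad f x0)) \<le> inverse (w^8) * norm (grad f x0)^2"
proof -
  define H where "H = hess f x0"
  define g where "g = grad f x0"
  define u where "u = matrix_inv H *v g"
  have \<rho>: "0 < \<rho>" using h by linarith
  have x0S: "x0 \<in> S" using B \<rho> by auto
  have "x0 \<in> ball x0 \<rho>" "x0 + h \<in> ball x0 \<rho>"
    using \<rho> h(2) by (simp_all only: centre_in_ball add_mem_ball_iff)
  note seg = ball_subset_segment_mem[OF B this]
  have sym: "transpose H = H"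
    unfolding H_def using transpose_hess[OF sm B \<rho> b3] .
  have E: "\<bar>g \<bullet> h + h \<bullet> (H *v h) / 2\<bar> \<le> norm h^3 / w"
    using quadratic_model_value[OF sm seg b3 fh K3 w(1,4)] unfolding g_def H_def .
  have e: "norm (H *v h - (l - 1) *\<^sub>R g) \<le> \<nu> * norm h^2 / w"
    using quadratic_model_gradient[OF sm seg b3 sym[unfolded H_def] gh K3] unfolding g_def H_def .
  have Hu: "H *v u = g"
    unfolding u_def using matrix_inv_mult_vector[OF invertible_if_mat_ge_scalar[OF _ pd]] w
    unfolding H_def by simp
  have "\<bar>H$i$j\<bar> \<le> Mder S f 2" for i j
    using abs_pd_le_Mder[OF b2 _ x0S, of "[i,j]"] by (simp add: H_def hess_def del: pd.simps)
  then have "norm g \<le> real CARD('n) * real CARD('n) * Mder S f 2 * norm u"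
    using norm_matrix_vector_mult_le[of H "Mder S f 2" u] Hu by simp
  also have "\<dots> \<le> norm u / w"
    using mult_right_mono[OF K2 norm_ge_zero[of u]] by (simp add: power2_eq_square)
  finally have g: "norm g \<le> norm u / w" .
  show ?thesis
    using step_bound_of_quadratic_model[OF w _ Hu g h(1,3) E e] pd
    unfolding u_def g_def H_def by simp
qed

lemma step_bound_explicit_constant:
  fixes f :: "real^'n::finite \<Rightarrow> real" and x0 :: "real^'n" and \<rho>0 \<nu> :: real
  defines "S \<equiv> supball x0 \<rho>0"
    and "w \<equiv> 1 / (9 * real CARD('n)^3) * \<nu>
      / (1 + Mder (supball x0 \<rho>0) f 2 + Mder (supball x0 \<rho>0) f 3)"
  assumes sm: "smooth_on S f"
    and b2: "bdd_above {\<bar>pd is f x\<bar> | is x. length is = 2 \<and> x \<in> S}"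
    and b3: "bdd_above {\<bar>pd is f x\<bar> | is x. length is = 3 \<and> x \<in> S}"
    and \<nu>: "0 < \<nu>" "\<nu> < 1" and pd: "mat_ge_scalar (hess f x0) \<nu>"
    and h: "0 < norm h" "norm h < min \<rho>0 (w^6)"
    and fh: "\<bar>f (x0 + h) - f x0\<bar> \<le> norm h^3"
    and gh: "norm (grad f (x0 + h) - l *\<^sub>R grad f x0) \<le> norm h^2"
  shows "norm (h + 2 *\<^sub>R (matrix_inv (hess f x0) *v grad f x0)) \<le> inverse (w^8) * norm (grad f x0)^2"
proof -
  have x0S: "x0 \<in> S"
  proof -
    have "norm h < \<rho>0" using h by simp
    then have "0 < \<rho>0" using norm_ge_zero[of h] by linarith
    then show ?thesis using ball_subset_supball[of x0 \<rho>0] unfolding S_def by auto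
  qed
  have "0 \<le> Mder S f 2" "0 \<le> Mder S f 3"
    using Mder_nonneg[OF b2 x0S] Mder_nonneg[OF b3 x0S] .
  then have wb: "0 < w" "w \<le> 1/9" "w \<le> \<nu>" "\<nu> \<le> 1"
      "1 + real CARD('n)^3 * Mder S f 3 \<le> \<nu> / w" "real CARD('n)^2 * Mder S f 2 \<le> 1 / w"
    using weight_bounds[of "real CARD('n)", OF _ _ _ \<nu> w_def[folded S_def, THEN meta_eq_to_obj_eq]] \<nu>
    by auto
  moreover have "norm h < \<rho>0" "norm h < w^6"
    using h(2) by simp_all
  ultimately show ?thesis
    using step_bound_of_smooth[OF sm ball_subset_supball[of x0 \<rho>0, folded S_def] b2 b3 wb pd h(1) _ _ fh gh]
    by blast
qed

theorem lemma4p8: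
  "\<exists>c::real. c > 0 \<and>
     (\<forall>(f :: real^'n::finite \<Rightarrow> real) x0 \<rho>0 \<nu> h l.
        let S = supball x0 \<rho>0;
            \<nu>1 = c * \<nu> / (1 + Mder S f 2 + Mder S f 3)
        in smooth_on S f \<longrightarrow>
           bdd_above {\<bar>pd is f x\<bar> | is x. length is = 2 \<and> x \<in> S} \<longrightarrow>
           bdd_above {\<bar>pd is f x\<bar> | is x. length is = 3 \<and> x \<in> S} \<longrightarrow>
           0 < \<nu> \<longrightarrow> \<nu> < 1 \<longrightarrow> mat_ge_scalar (hess f x0) \<nu> \<longrightarrow>
           0 < norm h \<longrightarrow> norm h < min \<rho>0 (\<nu>1 ^ 6) \<longrightarrow>
           \<bar>f (x0 + h) - f x0\<bar> \<le> norm h ^ 3 \<longrightarrow>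
           norm (grad f (x0 + h) - l *\<^sub>R grad f x0) \<le> norm h ^ 2 \<longrightarrow>
           norm (h + 2 *\<^sub>R (matrix_inv (hess f x0) *v grad f x0))
             \<le> inverse (\<nu>1 ^ 8) * norm (grad f x0) ^ 2)"
  unfolding Let_def
proof (intro exI[of _ "1 / (9 * real CARD('n)^3)"] conjI allI impI)
  show "0 < 1 / (9 * real CARD('n)^3)" by simp
qed (rule step_bound_explicit_constant; assumption)

end
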